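(* Let $\varphi(\bm x,\bm y,w,\bm z)$ be a $w$-simple Presburger formula (with $\bm u=(\bm x,\bm y,\bm z)$ in the definition below), where $w$ is a single variable and $\bm x,\bm y$ have the same length. Then over $\mathbb{Z}$ the formulas $\exists^{\mathsf{ram}}\bm x,\bm y\colon\exists w\colon\varphi(\bm x,\bm y,w,\bm z)$ and $\exists^{\mathsf{ram}}(\bm x,v_1,v_2),(\bm y,w_1,w_2)\colon\varphi(\bm x,\bm y,v_1+w_2,\bm z)\wedge\bm x\neq\bm y$ are equivalent, where $v_1,v_2,w_1,w_2$ are fresh single variables.
   Context: Work over $\mathbb{Z}$ in the structure $\langle\mathbb{Z};+,<,0,1,(\equiv_e)_{e>0}\rangle$, where the modulo constraint $s\equiv_e t$ holds iff $e$ divides $s-t$. For a vector of variables $\bm u$ and a variable $w$, a formula $\varphi(\bm u,w)$ is $w$-simple if it is a Boolean combination of atoms of the forms $\bm r^\top\bm u+c<w$, $w<\bm r^\top\bm u+c$ (with $\bm r$ an integer vector and $c\in\mathbb{Z}$) and modulo constraints over $\bm u$ and $w$. Ramsey quantifier: $\exists^{\mathsf{ram}}\bm x,\bm y\colon\psi(\bm x,\bm y,\bm z)$ holds for $\bm c$ iff there is an infinite sequence of pairwise distinct integer vectors $(\bm a_i)_{i\ge1}$ with $\psi(\bm a_i,\bm a_j,\bm c)$ for all $i<j$. *)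

theory Defs
  imports Main
begin

text \<open>Linear forms over a vector of integer variables u, given by a coefficient list.
  (Coefficient lists shorter/longer than u are harmless: zip truncates, which is the
  same as padding with zero coefficients.)\<close>
definition dot :: "int list \<Rightarrow> int list \<Rightarrow> int" where
  "dot r u = sum_list (map2 (*) r u)"

text \<open>Syntax of w-simple formulas \<phi>(u,w):
  LtW r c      :  r.u + c < w
  GtW r c      :  w < r.u + c
  ModW e r b c :  r.u + b*w + c \<equiv>_e 0   (a modulo constraint over u and w, e > 0;
                  any s \<equiv>_e t with linear terms s,t is of this form via s - t)\<close>
datatype wsimple =
    LtW "int list" int
  | GtW "int list" int
  | ModW int "int list" int int
  | NegW wsimple
  | AndW wsimple wsimple
  | OrW wsimple wsimple

primrec wsat :: "wsimple \<Rightarrow> int list \<Rightarrow> int \<Rightarrow> bool" where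
  "wsat (LtW r c) u w = (dot r u + c < w)"
| "wsat (GtW r c) u w = (w < dot r u + c)"
| "wsat (ModW e r b c) u w = (e > 0 \<and> e dvd (dot r u + b * w + c))"
| "wsat (NegW f) u w = (\<not> wsat f u w)"
| "wsat (AndW f g) u w = (wsat f u w \<and> wsat g u w)"
| "wsat (OrW f g) u w = (wsat f u w \<or> wsat g u w)"

definition ramsey_on :: "'a set \<Rightarrow> ('a \<Rightarrow> 'a \<Rightarrow> bool) \<Rightarrow> bool" where
  "ramsey_on A R \<longleftrightarrow> (\<exists>a :: nat \<Rightarrow> 'a. inj a \<and> (\<forall>i. a i \<in> A) \<and> (\<forall>i j. i < j \<longrightarrow> R (a i) (a j)))"

end

theory Submission
  imports Defs "HOL-Library.Ramsey"
begin

text \<open>Whether \<phi>(u,w) holds depends only on the position of w relative to the finitely many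
  bound terms r\<cdot>u + c of \<phi> and on the residue of w modulo the product M of its moduli.  Hence
  a witness w can always be replaced by one of the form r\<cdot>u + c + d, where (r,c) is a bound term
  or 0 and \<bar>d\<bar> \<le> M.  Along a Ramsey sequence for \<exists>w. \<phi>, Ramsey's theorem for pairs makes the
  choice of (r,c,d) uniform on a subsequence.  Splitting r\<cdot>(x,y,z) = r1\<cdot>x + r2\<cdot>y + r3\<cdot>z,
  the witness for a pair x_i, x_j of the subsequence is then v1 + w2, where
  v1 = r1\<cdot>x_i + r3\<cdot>z + c + d depends only on x_i and w2 = r2\<cdot>x_j only on x_j.\<close>

primrec wbounds :: "wsimple \<Rightarrow> (int list \<times> int) list" where
  "wbounds (LtW r c) = [(r, c)]"
| "wbounds (GtW r c) = [(r, c)]"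
| "wbounds (ModW e r b c) = []"
| "wbounds (NegW f) = wbounds f"
| "wbounds (AndW f g) = wbounds f @ wbounds g"
| "wbounds (OrW f g) = wbounds f @ wbounds g"

primrec wperiod :: "wsimple \<Rightarrow> int" where
  "wperiod (LtW r c) = 1"
| "wperiod (GtW r c) = 1"
| "wperiod (ModW e r b c) = (if e > 0 then e else 1)"
| "wperiod (NegW f) = wperiod f"
| "wperiod (AndW f g) = wperiod f * wperiod g"
| "wperiod (OrW f g) = wperiod f * wperiod g"

definition same_cut :: "int set \<Rightarrow> int \<Rightarrow> int \<Rightarrow> bool" where
  "same_cut T x y \<longleftrightarrow> (\<forall>q\<in>T. (x < q \<longleftrightarrow> y < q) \<and> (q < x \<longleftrightarrow> q < y))"

lemma same_cut_subset: "S \<subseteq> T \<Longrightarrow> same_cut T x y \<Longrightarrow> same_cut S x y"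
  unfolding same_cut_def by blast

lemma wperiod_pos: "wperiod f > 0"
  by (induction f) auto

lemma wsat_cong:
  assumes "same_cut ((\<lambda>(r, c). dot r u + c) ` set (wbounds f)) w w'"
    and "wperiod f dvd (w - w')"
  shows "wsat f u w = wsat f u w'"
  using assms
proof (induction f)
  case (ModW e r b c)
  show ?case
  proof (cases "e > 0")
    case True
    then have "e dvd b * (w - w')"
      using ModW.prems(2) by simp
    moreover have "dot r u + b * w + c = (dot r u + b * w' + c) + b * (w - w')"
      by (simp add: algebra_simps)
    ultimately have "e dvd dot r u + b * w + c \<longleftrightarrow> e dvd dot r u + b * w' + c"
      by (metis dvd_add_left_iff)
    then show ?thesis
      by simp
  qed simp
next
  case (AndW f g)
  have "wperiod f * wperiod g dvd (w - w')"
    using AndW.prems(2) by simp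
  then have "wperiod f dvd (w - w')" "wperiod g dvd (w - w')"
    by (rule dvd_mult_left, rule dvd_mult_right)
  moreover have "same_cut ((\<lambda>(r, c). dot r u + c) ` set (wbounds f)) w w'"
    "same_cut ((\<lambda>(r, c). dot r u + c) ` set (wbounds g)) w w'"
    by (rule same_cut_subset[OF image_mono AndW.prems(1)], simp)+
  ultimately show ?case
    using AndW.IH by simp
next
  case (OrW f g)
  have "wperiod f * wperiod g dvd (w - w')"
    using OrW.prems(2) by simp
  then have "wperiod f dvd (w - w')" "wperiod g dvd (w - w')"
    by (rule dvd_mult_left, rule dvd_mult_right)
  moreover have "same_cut ((\<lambda>(r, c). dot r u + c) ` set (wbounds f)) w w'"
    "same_cut ((\<lambda>(r, c). dot r u + c) ` set (wbounds g)) w w'"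
    by (rule same_cut_subset[OF image_mono OrW.prems(1)], simp)+
  ultimately show ?case
    using OrW.IH by simp
qed (auto simp: same_cut_def)

lemma exists_congruent_in_interval:
  fixes M L w :: int
  assumes "M > 0" "L < w"
  shows "\<exists>x. L < x \<and> x \<le> w \<and> x \<le> L + M \<and> M dvd (x - w)"
proof -
  define x where "x = L + 1 + (w - L - 1) mod M"
  have "0 \<le> (w - L - 1) mod M" "(w - L - 1) mod M < M"
    using assms(1) by simp_all
  moreover have "(w - L - 1) mod M \<le> w - L - 1"
    using assms by (intro zmod_le_nonneg_dividend) simp
  moreover have "x - w = - ((w - L - 1) - (w - L - 1) mod M)"
    by (simp add: x_def)
  then have "M dvd (x - w)"
    by (simp only: dvd_minus_iff dvd_minus_mod)
  ultimately show ?thesis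
    by (intro exI[of _ x]) (auto simp: x_def)
qed

lemma exists_congruent_same_cut:
  fixes T :: "int set" and M w :: int
  assumes "finite T" "T \<noteq> {}" "M > 0"
  shows "\<exists>p\<in>T. \<exists>d. \<bar>d\<bar> \<le> M \<and> M dvd (p + d - w) \<and> same_cut T (p + d) w"
proof -
  consider "w \<in> T" | "w \<notin> T" "\<exists>q\<in>T. q < w" | "\<forall>q\<in>T. w < q"
    by (metis linorder_neqE)
  then show ?thesis
  proof cases
    case 1
    then show ?thesis
      using assms(3) by (intro bexI[of _ w] exI[of _ 0]) (auto simp: same_cut_def)
  next
    case 2
    define L where "L = Max {q\<in>T. q < w}"
    have fin: "finite {q\<in>T. q < w}" "{q\<in>T. q < w} \<noteq> {}"
      using 2 assms(1) by auto
    have L: "L \<in> T" "L < w"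
      using Max_in[OF fin] by (simp_all add: L_def)
    have L_max: "q \<le> L" if "q \<in> T" "q < w" for q
      using Max_ge[OF fin(1)] that by (simp add: L_def)
    obtain x where x: "L < x" "x \<le> w" "x \<le> L + M" "M dvd (x - w)"
      using exists_congruent_in_interval[OF assms(3) \<open>L < w\<close>] by blast
    have "same_cut T x w"
      unfolding same_cut_def
    proof
      fix q assume "q \<in> T"
      then consider "q \<le> L" | "w < q"
        using L_max 2(1) not_less_iff_gr_or_eq by blast
      then show "(x < q \<longleftrightarrow> w < q) \<and> (q < x \<longleftrightarrow> q < w)"
        using x(1,2) L(2) by cases auto
    qed
    moreover have "\<bar>x - L\<bar> \<le> M"
      using x(1,3) by simp
    ultimately show ?thesis
      using L(1) x(4) by (intro bexI[of _ L] exI[of _ "x - L"]) simp_all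
  next
    case 3
    define U where "U = Min T"
    have U: "U \<in> T" "w < U" and U_min: "\<And>q. q \<in> T \<Longrightarrow> U \<le> q"
      using 3 assms(1,2) by (auto simp: U_def)
    obtain x where x: "- U < x" "x \<le> - w" "x \<le> - U + M" "M dvd (x - - w)"
      using exists_congruent_in_interval[OF assms(3), of "- U" "- w"] U by auto
    have "M dvd - (x - - w)"
      using x(4) by (simp only: dvd_minus_iff)
    then have "M dvd (- x - w)"
      by simp
    moreover have "same_cut T (- x) w"
      unfolding same_cut_def
    proof
      fix q assume "q \<in> T"
      then have "- x < q" "w < q"
        using 3 U_min[of q] x(1) by auto
      then show "(- x < q \<longleftrightarrow> w < q) \<and> (q < - x \<longleftrightarrow> q < w)"
        by auto
    qed
    moreover have "\<bar>- x - U\<bar> \<le> M"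
      using x(1,3) by simp
    ultimately show ?thesis
      using U(1) by (intro bexI[of _ U] exI[of _ "- x - U"]) simp_all
  qed
qed

lemma wsat_near_bound:
  assumes "wsat f u w"
  shows "\<exists>(r, c)\<in>set (([], 0) # wbounds f). \<exists>d\<in>{- wperiod f .. wperiod f}.
           wsat f u (dot r u + c + d)"
proof -
  define T where "T = (\<lambda>(r, c). dot r u + c) ` set (([], 0) # wbounds f)"
  have "finite T" "T \<noteq> {}"
    by (simp_all add: T_def)
  then obtain p d where p: "p \<in> T" and d: "\<bar>d\<bar> \<le> wperiod f" "wperiod f dvd (p + d - w)"
    and cut: "same_cut T (p + d) w"
    using exists_congruent_same_cut[OF _ _ wperiod_pos] by blast
  obtain r c where rc: "(r, c) \<in> set (([], 0) # wbounds f)" "p = dot r u + c"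
    using p unfolding T_def by fastforce
  have "same_cut ((\<lambda>(r, c). dot r u + c) ` set (wbounds f)) (p + d) w"
    using same_cut_subset[OF _ cut] by (auto simp: T_def)
  then have "wsat f u (dot r u + c + d)"
    using wsat_cong[OF _ d(2)] assms rc(2) by simp
  moreover have "d \<in> {- wperiod f .. wperiod f}"
    using d(1) by (simp add: abs_le_iff)
  ultimately have "\<exists>d\<in>{- wperiod f .. wperiod f}. wsat f u (dot r u + c + d)"
    by blast
  then show ?thesis
    using rc(1) by (intro bexI[of _ "(r, c)"]) simp_all
qed

lemma dot_append:
  "dot r (x @ v) = dot (take (length x) r) x + dot (drop (length x) r) v"
proof (induction x arbitrary: r)
  case Nil
  then show ?case by (simp add: dot_def)
next
  case (Cons a x)
  then show ?case by (cases r) (auto simp: dot_def)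
qed

lemma dot_append3:
  assumes "length x = n" "length y = n"
  shows "dot r (x @ y @ z)
    = dot (take n r) x + dot (take n (drop n r)) y + dot (drop n (drop n r)) z"
  using assms by (simp add: dot_append)

lemma ramsey_pairs_finite_colours:
  fixes P :: "'c \<Rightarrow> nat \<Rightarrow> nat \<Rightarrow> bool"
  assumes "finite K" and coloured: "\<And>i j. i < j \<Longrightarrow> \<exists>k\<in>K. P k i j"
  shows "\<exists>k\<in>K. \<exists>s :: nat \<Rightarrow> nat. strict_mono s \<and> (\<forall>i j. i < j \<longrightarrow> P k (s i) (s j))"
proof -
  obtain ks where ks: "set ks = K"
    using finite_list[OF assms(1)] by blast
  define colour where "colour S = (LEAST m. m < length ks \<and> P (ks ! m) (Min S) (Max S))"
    for S :: "nat set"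
  have colour: "colour {i, j} < length ks \<and> P (ks ! colour {i, j}) i j" if ij: "i < j" for i j
  proof -
    obtain m where "m < length ks" "P (ks ! m) i j"
      using coloured[OF ij] ks by (auto simp: in_set_conv_nth)
    moreover have "Min {i, j} = i" "Max {i, j} = j"
      using ij by auto
    ultimately show ?thesis
      unfolding colour_def by (metis (mono_tags, lifting) LeastI)
  qed
  have colour_bound: "\<forall>i\<in>UNIV. \<forall>j\<in>UNIV. i \<noteq> j \<longrightarrow> colour {i, j} < length ks"
  proof (intro ballI impI)
    fix i j :: nat
    assume "i \<noteq> j"
    then have "min i j < max i j" "{min i j, max i j} = {i, j}"
      by (auto simp: min_def max_def)
    then show "colour {i, j} < length ks"
      using colour[of "min i j" "max i j"] by simp
  qed
  obtain Y t where Y: "infinite Y" "t < length ks"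
    and mono: "\<forall>i\<in>Y. \<forall>j\<in>Y. i \<noteq> j \<longrightarrow> colour {i, j} = t"
    using Ramsey2[OF infinite_UNIV_nat colour_bound] by blast
  define s where "s = enumerate Y"
  have "strict_mono s"
    unfolding s_def by (rule strict_monoI) (rule enumerate_mono[OF _ Y(1)])
  moreover have "P (ks ! t) (s i) (s j)" if "i < j" for i j
  proof -
    have "s i < s j" "s i \<in> Y" "s j \<in> Y"
      using \<open>strict_mono s\<close> that Y(1) by (simp_all add: strict_mono_def s_def enumerate_in_set)
    then have "colour {s i, s j} = t"
      using mono less_imp_neq by blast
    then show ?thesis
      using colour[OF \<open>s i < s j\<close>] by simp
  qed
  ultimately have "\<exists>s :: nat \<Rightarrow> nat. strict_mono s \<and> (\<forall>i j. i < j \<longrightarrow> P (ks ! t) (s i) (s j))"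
    by blast
  moreover have "ks ! t \<in> K"
    using Y(2) ks nth_mem by blast
  ultimately show ?thesis
    by blast
qed

lemma ramsey_exists_imp_ramsey_split:
  assumes "ramsey_on {x :: int list. length x = n} (\<lambda>x y. \<exists>w. wsat \<phi> (x @ y @ z) w)"
  shows "ramsey_on ({x :: int list. length x = n} \<times> (UNIV :: int set) \<times> (UNIV :: int set))
           (\<lambda>(x, v1, v2) (y, w1, w2). wsat \<phi> (x @ y @ z) (v1 + w2) \<and> x \<noteq> y)"
proof -
  obtain a :: "nat \<Rightarrow> int list" where "inj a" and len: "\<And>i. length (a i) = n"
    and witness: "\<And>i j. i < j \<Longrightarrow> \<exists>w. wsat \<phi> (a i @ a j @ z) w"
    using assms unfolding ramsey_on_def by auto
  let ?K = "set (([], 0) # wbounds \<phi>) \<times> {- wperiod \<phi> .. wperiod \<phi>}"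
  let ?P = "\<lambda>((r, c), d) i j. wsat \<phi> (a i @ a j @ z) (dot r (a i @ a j @ z) + c + d)"
  have "\<exists>k\<in>?K. ?P k i j" if ij: "i < j" for i j
  proof -
    obtain r c d where "(r, c) \<in> set (([], 0) # wbounds \<phi>)" "d \<in> {- wperiod \<phi> .. wperiod \<phi>}"
      and "wsat \<phi> (a i @ a j @ z) (dot r (a i @ a j @ z) + c + d)"
      using witness[OF ij] wsat_near_bound by blast
    then show ?thesis
      by (intro bexI[of _ "((r, c), d)"]) auto
  qed
  then obtain k and s :: "nat \<Rightarrow> nat" where "strict_mono s"
    and uniform_k: "\<forall>i j. i < j \<longrightarrow> ?P k (s i) (s j)"
    using ramsey_pairs_finite_colours[of ?K ?P] by blast
  obtain r c d where "k = ((r, c), d)"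
    by (metis prod.collapse)
  then have uniform: "\<And>i j. i < j \<Longrightarrow>
      wsat \<phi> (a (s i) @ a (s j) @ z) (dot r (a (s i) @ a (s j) @ z) + c + d)"
    using uniform_k by simp
  have inj_as: "inj (a \<circ> s)"
    using \<open>inj a\<close> strict_mono_imp_inj_on[OF \<open>strict_mono s\<close>] by (simp add: inj_compose)
  define b where "b i = (a (s i), dot (take n r) (a (s i)) + dot (drop n (drop n r)) z + c + d,
                         dot (take n (drop n r)) (a (s i)))" for i
  have "inj b"
    using inj_as by (auto simp: inj_def b_def)
  moreover have "wsat \<phi> (a (s i) @ a (s j) @ z) (fst (snd (b i)) + snd (snd (b j)))
                 \<and> a (s i) \<noteq> a (s j)" if "i < j" for i j
  proof
    show "wsat \<phi> (a (s i) @ a (s j) @ z) (fst (snd (b i)) + snd (snd (b j)))"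
      using uniform[OF that] dot_append3[OF len len] by (simp add: b_def algebra_simps)
    show "a (s i) \<noteq> a (s j)"
      using inj_as that by (metis comp_apply inj_eq less_irrefl)
  qed
  ultimately show ?thesis
    unfolding ramsey_on_def by (intro exI[of _ b]) (auto simp: b_def len)
qed

lemma ramsey_split_imp_ramsey_exists:
  assumes "ramsey_on ({x :: int list. length x = n} \<times> (UNIV :: int set) \<times> (UNIV :: int set))
             (\<lambda>(x, v1, v2) (y, w1, w2). wsat \<phi> (x @ y @ z) (v1 + w2) \<and> x \<noteq> y)"
  shows "ramsey_on {x :: int list. length x = n} (\<lambda>x y. \<exists>w. wsat \<phi> (x @ y @ z) w)"
proof -
  obtain b :: "nat \<Rightarrow> int list \<times> int \<times> int" where len: "\<And>i. length (fst (b i)) = n"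
    and related: "\<And>i j. i < j \<Longrightarrow>
      (\<lambda>(x, v1, v2) (y, w1, w2). wsat \<phi> (x @ y @ z) (v1 + w2) \<and> x \<noteq> y) (b i) (b j)"
    using assms unfolding ramsey_on_def by (auto simp: mem_Times_iff)
  have pair: "wsat \<phi> (fst (b i) @ fst (b j) @ z) (fst (snd (b i)) + snd (snd (b j)))
      \<and> fst (b i) \<noteq> fst (b j)" if "i < j" for i j
    using related[OF that] by (simp add: split_beta)
  have "inj (fst \<circ> b)"
    by (rule injI) (metis comp_apply linorder_neqE_nat pair)
  then show ?thesis
    unfolding ramsey_on_def using len pair by (intro exI[of _ "fst \<circ> b"]) auto
qed

theorem mainTheorem4:
  fixes \<phi> :: wsimple and n :: nat and z :: "int list"
  shows "ramsey_on {x :: int list. length x = n}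
            (\<lambda>x y. \<exists>w. wsat \<phi> (x @ y @ z) w)
     \<longleftrightarrow> ramsey_on ({x :: int list. length x = n} \<times> (UNIV :: int set) \<times> (UNIV :: int set))
            (\<lambda>(x, v1, v2) (y, w1, w2). wsat \<phi> (x @ y @ z) (v1 + w2) \<and> x \<noteq> y)"
  using ramsey_exists_imp_ramsey_split ramsey_split_imp_ramsey_exists by blast

end
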